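(* Let $\alpha$ be a formula without points-to atoms with $\mathcal P(\alpha)\subseteq\mathcal P_r$, $s$ a store and $h':\mathcal L\to\mathcal L^{\kappa+\nu+\mu}$ a heap. If $(s,h')\models_{\mathcal R_r}\widehat\alpha$, then every location $\ell\in\mathrm{dom}(h')$ with $h'(\ell)=\vec\ell_\bot$ has a connection in $h'$, i.e. there is $\ell'\in\mathrm{dom}(h')$ with $h'(\ell')\ne\vec\ell_\bot$ such that $\ell$ is one of the last $\mu$ components of $h'(\ell')$.
   Context: Separation logic: variables, constant $\bot$; formulas from $x\not\approx x'$, $x\approx x'$, $x\mapsto(t_1,\dots,t_k)$, predicate atoms, $*$, $\vee$, $\exists$. SID: finite set of rules $p(x_1,\dots,x_n)\Leftarrow\pi$. $\mathcal P(\phi)$: predicates reachable (reflexively) from those of $\phi$ through rule bodies. Locations $\mathcal L$ with $\ell_\bot$; stores map variables and $\bot$ to locations with $s(x)=\ell_\bot$ iff $x=\bot$; heaps are finite partial maps $\mathcal L\to\mathcal L^k$ avoiding $\ell_\bot$ in the domain; standard SL semantics $\models$ (predicate atoms via rules with existential variables interpreted by an extension of the store). A rule is connected iff its body is $x_1\mapsto(t_1,\dots,t_k)*\rho$ with $\rho$ free of points-to atoms and every predicate atom in $\rho$ has first argument among $t_1,\dots,t_k$. Standing assumptions: $\mathcal R$ is an SID of progressing rules $p(x_1,\dots,x_n)\Leftarrow x_1\mapsto(y_1,\dots,y_\kappa)*\rho$ (part of a safe entailment problem $(\phi,\psi,\mathcal R)$), $\mathcal P_r=\mathcal P(\psi)$;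 $\vec w=(w_1,\dots,w_\nu)$, $\nu>0$, are variables not occurring in $\mathcal R$; stores considered have $w_1,\dots,w_\nu$ in their domain (hence $s(w_i)\neq\ell_\bot$); every rule of $\mathcal R$ has exactly $\mu$ existential variables. $\vec\bot$ ($\vec\ell_\bot$) is $\kappa+\nu+\mu$ copies of $\bot$ ($\ell_\bot$); $\mathsf{bot}$ is a unary predicate with single rule $\mathsf{bot}(x)\Leftarrow x\mapsto\vec\bot$, included in $\mathcal R_r$. Each $p\in\mathcal P_r$ of arity $n$ gets a fresh $\widehat p$ of arity $n+\nu$; $\widehat\alpha$ replaces each atom $p(x_1,\dots,x_n)$ by $\widehat p(x_1,\dots,x_n,\vec w)$. $\widehat{\mathcal R}_0$ consists of the rules $\widehat p(x_1,\dots,x_n,\vec w)\Leftarrow x_1\mapsto(y_1,\dots,y_\kappa,\vec w,z_1,\dots,z_\mu)\sigma*\widehat\rho\sigma*\mathop{*}_{i\in I}\mathsf{bot}(z_i)*\mathop{*}_{x\in\mathrm{dom}(\sigma)}x\approx\sigma(x)$ for every rule $p(x_1,\dots,x_n)\Leftarrow x_1\mapsto(y_1,\dots,y_\kappa)*\rho$ of $\mathcal R$ with $p\in\mathcal P_r$, fresh $z_1,\dots,z_\mu$, substitution $\sigma$ with $\mathrm{dom}(\sigma)\subseteq\mathrm{fv}(\rho)\setminus\{x_1\}$, $\mathrm{img}(\sigma)\subseteq\{w_1,\dots,w_\nu\}$, and $I\subseteq\{1,\dots,\mu\}$. $\mathcal R_r$ is the set of connected rules of $\widehat{\mathcal R}_0$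 together with the $\mathsf{bot}$ rule. *)

theory Defs
  imports Main
begin

datatype 'v sterm = Var 'v | Bot

datatype ('v, 'p) form =
    Neq "'v sterm" "'v sterm"
  | Eq "'v sterm" "'v sterm"
  | PointsTo "'v sterm" "'v sterm list"
  | Pred 'p "'v sterm list"
  | Star "('v, 'p) form" "('v, 'p) form"
  | Or "('v, 'p) form" "('v, 'p) form"
  | Ex 'v "('v, 'p) form"

type_synonym ('v, 'p) rule = "'p \<times> 'v list \<times> ('v, 'p) form"

fun tvars :: "'v sterm \<Rightarrow> 'v set" where
  "tvars (Var x) = {x}"
| "tvars Bot = {}"

fun fv :: "('v, 'p) form \<Rightarrow> 'v set" where
  "fv (Neq t u) = tvars t \<union> tvars u"
| "fv (Eq t u) = tvars t \<union> tvars u"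
| "fv (PointsTo t ts) = tvars t \<union> \<Union> (tvars ` set ts)"
| "fv (Pred p ts) = \<Union> (tvars ` set ts)"
| "fv (Star a b) = fv a \<union> fv b"
| "fv (Or a b) = fv a \<union> fv b"
| "fv (Ex x a) = fv a - {x}"

fun allvars :: "('v, 'p) form \<Rightarrow> 'v set" where
  "allvars (Neq t u) = tvars t \<union> tvars u"
| "allvars (Eq t u) = tvars t \<union> tvars u"
| "allvars (PointsTo t ts) = tvars t \<union> \<Union> (tvars ` set ts)"
| "allvars (Pred p ts) = \<Union> (tvars ` set ts)"
| "allvars (Star a b) = allvars a \<union> allvars b"
| "allvars (Or a b) = allvars a \<union> allvars b"
| "allvars (Ex x a) = insert x (allvars a)"

definition rule_vars :: "('v, 'p) rule \<Rightarrow> 'v set" where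
  "rule_vars r = (case r of (p, xs, body) \<Rightarrow> set xs \<union> allvars body)"

fun preds :: "('v, 'p) form \<Rightarrow> 'p set" where
  "preds (Pred p ts) = {p}"
| "preds (Star a b) = preds a \<union> preds b"
| "preds (Or a b) = preds a \<union> preds b"
| "preds (Ex x a) = preds a"
| "preds _ = {}"

fun atoms :: "('v, 'p) form \<Rightarrow> ('p \<times> 'v sterm list) set" where
  "atoms (Pred p ts) = {(p, ts)}"
| "atoms (Star a b) = atoms a \<union> atoms b"
| "atoms (Or a b) = atoms a \<union> atoms b"
| "atoms (Ex x a) = atoms a"
| "atoms _ = {}"

fun pto_free :: "('v, 'p) form \<Rightarrow> bool" where
  "pto_free (PointsTo t ts) = False"
| "pto_free (Star a b) = (pto_free a \<and> pto_free b)"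
| "pto_free (Or a b) = (pto_free a \<and> pto_free b)"
| "pto_free (Ex x a) = pto_free a"
| "pto_free _ = True"

inductive_set reach :: "('v, 'p) rule set \<Rightarrow> ('v, 'p) form \<Rightarrow> 'p set"
  for R :: "('v, 'p) rule set" and \<phi> :: "('v, 'p) form" where
  base: "p \<in> preds \<phi> \<Longrightarrow> p \<in> reach R \<phi>"
| step: "p \<in> reach R \<phi> \<Longrightarrow> (p, xs, body) \<in> R \<Longrightarrow> q \<in> preds body \<Longrightarrow> q \<in> reach R \<phi>"

text \<open>Stores are total maps from variables to locations (with no variable mapped to
  the distinguished location \<open>lbot\<close>); the constant bot is interpreted as \<open>lbot\<close>.\<close>

fun tval :: "'l \<Rightarrow> ('v \<Rightarrow> 'l) \<Rightarrow> 'v sterm \<Rightarrow> 'l" where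
  "tval lbot s (Var x) = s x"
| "tval lbot s Bot = lbot"

definition is_store :: "'l \<Rightarrow> ('v \<Rightarrow> 'l) \<Rightarrow> bool" where
  "is_store lbot s \<longleftrightarrow> (\<forall>x. s x \<noteq> lbot)"

definition is_heap :: "'l \<Rightarrow> nat \<Rightarrow> ('l \<rightharpoonup> 'l list) \<Rightarrow> bool" where
  "is_heap lbot k h \<longleftrightarrow> finite (dom h) \<and> lbot \<notin> dom h \<and> (\<forall>l v. h l = Some v \<longrightarrow> length v = k)"

inductive sat :: "('v, 'p) rule set \<Rightarrow> 'l \<Rightarrow> ('v \<Rightarrow> 'l) \<Rightarrow> ('l \<rightharpoonup> 'l list) \<Rightarrow> ('v, 'p) form \<Rightarrow> bool"
  for R :: "('v, 'p) rule set" and lbot :: 'l where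
  sat_eq: "tval lbot s t = tval lbot s u \<Longrightarrow> h = Map.empty \<Longrightarrow> sat R lbot s h (Eq t u)"
| sat_neq: "tval lbot s t \<noteq> tval lbot s u \<Longrightarrow> h = Map.empty \<Longrightarrow> sat R lbot s h (Neq t u)"
| sat_pto: "tval lbot s t \<noteq> lbot \<Longrightarrow> h = [tval lbot s t \<mapsto> map (tval lbot s) ts] \<Longrightarrow>
      sat R lbot s h (PointsTo t ts)"
| sat_star: "dom h1 \<inter> dom h2 = {} \<Longrightarrow> sat R lbot s h1 a \<Longrightarrow> sat R lbot s h2 b \<Longrightarrow>
      sat R lbot s (h1 ++ h2) (Star a b)"
| sat_orL: "sat R lbot s h a \<Longrightarrow> sat R lbot s h (Or a b)"
| sat_orR: "sat R lbot s h b \<Longrightarrow> sat R lbot s h (Or a b)"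
| sat_ex: "v \<noteq> lbot \<Longrightarrow> sat R lbot (s(x := v)) h a \<Longrightarrow> sat R lbot s h (Ex x a)"
| sat_pred: "(p, xs, body) \<in> R \<Longrightarrow> length xs = length ts \<Longrightarrow>
      (\<forall>y. s' y \<noteq> lbot) \<Longrightarrow> (\<forall>i < length xs. s' (xs ! i) = tval lbot s (ts ! i)) \<Longrightarrow>
      sat R lbot s' h body \<Longrightarrow> sat R lbot s h (Pred p ts)"

definition progressing :: "nat \<Rightarrow> ('v, 'p) rule \<Rightarrow> bool" where
  "progressing \<kappa> r = (case r of (p, xs, body) \<Rightarrow>
     xs \<noteq> [] \<and> distinct xs \<and>
     (\<exists>ys \<rho>. body = Star (PointsTo (Var (hd xs)) ys) \<rho> \<and> length ys = \<kappa> \<and> pto_free \<rho>))"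

definition evars :: "('v, 'p) rule \<Rightarrow> 'v set" where
  "evars r = (case r of (p, xs, body) \<Rightarrow> fv body - set xs)"

definition connected :: "('v, 'p) rule \<Rightarrow> bool" where
  "connected r = (case r of (p, xs, body) \<Rightarrow>
     xs \<noteq> [] \<and> (\<exists>ts \<rho>. body = Star (PointsTo (Var (hd xs)) ts) \<rho> \<and> pto_free \<rho> \<and>
        (\<forall>(q, args) \<in> atoms \<rho>. args \<noteq> [] \<and> hd args \<in> set ts)))"

datatype 'p hpred = Hat 'p | BotP

fun hatf :: "'v list \<Rightarrow> ('v, 'p) form \<Rightarrow> ('v, 'p hpred) form" where
  "hatf ws (Neq t u) = Neq t u"
| "hatf ws (Eq t u) = Eq t u"
| "hatf ws (PointsTo t ts) = PointsTo t ts"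
| "hatf ws (Pred p ts) = Pred (Hat p) (ts @ map Var ws)"
| "hatf ws (Star a b) = Star (hatf ws a) (hatf ws b)"
| "hatf ws (Or a b) = Or (hatf ws a) (hatf ws b)"
| "hatf ws (Ex x a) = Ex x (hatf ws a)"

fun tsubst :: "('v \<rightharpoonup> 'v) \<Rightarrow> 'v sterm \<Rightarrow> 'v sterm" where
  "tsubst \<sigma> (Var x) = (case \<sigma> x of Some y \<Rightarrow> Var y | None \<Rightarrow> Var x)"
| "tsubst \<sigma> Bot = Bot"

fun fsubst :: "('v \<rightharpoonup> 'v) \<Rightarrow> ('v, 'p) form \<Rightarrow> ('v, 'p) form" where
  "fsubst \<sigma> (Neq t u) = Neq (tsubst \<sigma> t) (tsubst \<sigma> u)"
| "fsubst \<sigma> (Eq t u) = Eq (tsubst \<sigma> t) (tsubst \<sigma> u)"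
| "fsubst \<sigma> (PointsTo t ts) = PointsTo (tsubst \<sigma> t) (map (tsubst \<sigma>) ts)"
| "fsubst \<sigma> (Pred p ts) = Pred p (map (tsubst \<sigma>) ts)"
| "fsubst \<sigma> (Star a b) = Star (fsubst \<sigma> a) (fsubst \<sigma> b)"
| "fsubst \<sigma> (Or a b) = Or (fsubst \<sigma> a) (fsubst \<sigma> b)"
| "fsubst \<sigma> (Ex x a) = Ex x (fsubst (\<sigma>(x := None)) a)"

text \<open>\<open>\<widehat>\<R>\<^sub>0\<close>: for every rule \<open>p(x\<^sub>1..x\<^sub>n) \<Leftarrow> x\<^sub>1 \<mapsto> (y\<^sub>1..y\<^sub>\<kappa>) * \<rho>\<close> of \<open>\<R>\<close> with \<open>p \<in> \<P>\<^sub>r\<close>,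
  every substitution \<open>\<sigma>\<close> with \<open>dom \<sigma> \<subseteq> fv(\<rho>) - {x\<^sub>1}\<close> and image in \<open>\<vec>w\<close>, and every
  \<open>I \<subseteq> {1..\<mu>}\<close>, the rule
  \<open>\<widehat>p(x\<^sub>1..x\<^sub>n,\<vec>w) \<Leftarrow> x\<^sub>1 \<mapsto> (y\<^sub>1..y\<^sub>\<kappa>,\<vec>w,z\<^sub>1..z\<^sub>\<mu>)\<sigma> * \<widehat>\<rho>\<sigma> * (*\<^sub>i\<^sub>\<in>\<^sub>I bot(z\<^sub>i)) * (*\<^sub>x\<^sub>\<in>\<^sub>d\<^sub>o\<^sub>m\<^sub>\<sigma> x \<approx> \<sigma>(x))\<close>.
  The iterated separating conjunctions are written by enumerating the finite sets \<open>I\<close>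
  and \<open>dom \<sigma>\<close> by duplicate-free lists (any enumeration; all are equivalent).
  Indices of \<open>zs\<close> are 0-based here.\<close>
definition hatR0 :: "('v, 'p) rule set \<Rightarrow> 'p set \<Rightarrow> 'v list \<Rightarrow> 'v list \<Rightarrow> ('v, 'p hpred) rule set" where
  "hatR0 R Pr ws zs = {(Hat p, xs @ ws,
       Star (PointsTo (Var (hd xs)) (map (tsubst \<sigma>) (ys @ map Var ws @ map Var zs)))
            (foldl Star (fsubst \<sigma> (hatf ws \<rho>))
               (map (\<lambda>i. Pred BotP [Var (zs ! i)]) is @ map (\<lambda>x. Eq (Var x) (Var (the (\<sigma> x)))) ds)))
     | p xs ys \<rho> \<sigma> is ds.
       (p, xs, Star (PointsTo (Var (hd xs)) ys) \<rho>) \<in> R \<and> xs \<noteq> [] \<and> p \<in> Pr \<and>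
       dom \<sigma> \<subseteq> fv \<rho> - {hd xs} \<and> ran \<sigma> \<subseteq> set ws \<and>
       distinct is \<and> set is \<subseteq> {..<length zs} \<and> distinct ds \<and> set ds = dom \<sigma>}"

text \<open>The rule \<open>bot(x) \<Leftarrow> x \<mapsto> \<vec>\<bot>\<close> (\<open>\<kappa>+\<nu>+\<mu>\<close> copies of \<open>\<bot>\<close>); the name of the
  (local) head variable is immaterial, we use \<open>w\<^sub>1\<close>.\<close>
definition bot_rule :: "nat \<Rightarrow> 'v list \<Rightarrow> ('v, 'p hpred) rule" where
  "bot_rule k ws = (BotP, [hd ws], PointsTo (Var (hd ws)) (replicate k Bot))"

definition Rr :: "nat \<Rightarrow> ('v, 'p) rule set \<Rightarrow> 'p set \<Rightarrow> 'v list \<Rightarrow> 'v list \<Rightarrow> ('v, 'p hpred) rule set" where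
  "Rr \<kappa> R Pr ws zs = {r \<in> hatR0 R Pr ws zs. connected r} \<union> {bot_rule (\<kappa> + length ws + length zs) ws}"

end

theory Submission
  imports Defs
begin

text \<open>Induct on the derivation of \<open>(s,h) \<Turnstile> \<phi>\<close> with the invariant: every all-\<open>\<bottom>\<close> cell of \<open>h\<close>
  is either connected in \<open>h\<close> or is the value of the argument of a top-level \<open>bot\<close> atom of \<open>\<phi>\<close>.
  Points-to atoms in \<open>\<widehat>\<alpha>\<close> and in rule bodies of \<open>\<R>\<^sub>r\<close> always have a variable argument, whose
  value is not \<open>\<ell>\<^sub>\<bottom>\<close>, so all-\<open>\<bottom>\<close> cells are allocated only by the \<open>bot\<close> rule. When the
  invariant passes through a rule \<open>\<widehat>p\<close>, the arguments of its \<open>bot\<close> atoms are among \<open>z\<^sub>1,\<dots>,z\<^sub>\<mu>\<close>,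
  i.e. the last \<open>\<mu>\<close> components of the cell allocated by the rule, which is not all-\<open>\<bottom>\<close>.
  Finally \<open>\<widehat>\<alpha>\<close> has no \<open>bot\<close> atoms at all.\<close>

inductive_cases sat_StarE: "sat R lbot s h (Star a b)"
inductive_cases sat_PointsToE: "sat R lbot s h (PointsTo t ts)"

text \<open>Arguments of \<open>bot\<close> atoms must be visible in the current store, hence none below \<open>\<exists>\<close>.\<close>
fun bot_guarded :: "('v, 'p hpred) form \<Rightarrow> bool" where
  "bot_guarded (PointsTo t ts) = (\<exists>x. Var x \<in> set ts)"
| "bot_guarded (Star a b) = (bot_guarded a \<and> bot_guarded b)"
| "bot_guarded (Or a b) = (bot_guarded a \<and> bot_guarded b)"
| "bot_guarded (Ex x a) = (bot_guarded a \<and> BotP \<notin> preds a)"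
| "bot_guarded _ = True"

fun bot_args :: "('v, 'p hpred) form \<Rightarrow> 'v sterm set" where
  "bot_args (Pred BotP ts) = set (take 1 ts)"
| "bot_args (Star a b) = bot_args a \<union> bot_args b"
| "bot_args (Or a b) = bot_args a \<union> bot_args b"
| "bot_args _ = {}"

definition bot_cells :: "'l \<Rightarrow> nat \<Rightarrow> ('l \<rightharpoonup> 'l list) \<Rightarrow> 'l set" where
  "bot_cells lbot K h = {l. h l = Some (replicate K lbot)}"

definition connected_cells :: "'l \<Rightarrow> nat \<Rightarrow> nat \<Rightarrow> ('l \<rightharpoonup> 'l list) \<Rightarrow> 'l set" where
  "connected_cells lbot K d h =
     {l. \<exists>l' \<in> dom h. h l' \<noteq> Some (replicate K lbot) \<and> l \<in> set (drop d (the (h l')))}"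

lemma fv_subset_allvars: "fv \<phi> \<subseteq> allvars \<phi>"
  by (induction \<phi>) auto

lemma preds_fsubst [simp]: "preds (fsubst \<sigma> \<phi>) = preds \<phi>"
  by (induction \<phi> arbitrary: \<sigma>) auto

lemma tsubst_Var_is_Var: "\<exists>y. tsubst \<sigma> (Var x) = Var y"
  by (auto split: option.splits)

lemma tsubst_eq_VarD: "tsubst \<sigma> t = Var y \<Longrightarrow> \<exists>x. t = Var x"
  by (cases t) auto

lemma bot_guarded_fsubst [simp]: "bot_guarded (fsubst \<sigma> \<phi>) = bot_guarded \<phi>"
proof (induction \<phi> arbitrary: \<sigma>)
  case (PointsTo t ts)
  have "(\<exists>y. Var y \<in> tsubst \<sigma> ` set ts) \<longleftrightarrow> (\<exists>x. Var x \<in> set ts)"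
  proof
    assume "\<exists>y. Var y \<in> tsubst \<sigma> ` set ts"
    then obtain y t where t: "t \<in> set ts" "tsubst \<sigma> t = Var y"
      by (metis imageE)
    then show "\<exists>x. Var x \<in> set ts"
      using tsubst_eq_VarD[OF t(2)] by blast
  next
    assume "\<exists>x. Var x \<in> set ts"
    then obtain x where x: "Var x \<in> set ts" ..
    obtain y where y: "tsubst \<sigma> (Var x) = Var y"
      using tsubst_Var_is_Var ..
    have "Var y \<in> tsubst \<sigma> ` set ts"
      using imageI[OF x, of "tsubst \<sigma>"] unfolding y .
    then show "\<exists>y. Var y \<in> tsubst \<sigma> ` set ts" ..
  qed
  then show ?case by simp
qed auto

lemma BotP_notin_preds_hatf: "BotP \<notin> preds (hatf ws \<phi>)"
  by (induction \<phi>) auto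

lemma bot_guarded_hatf: "pto_free \<phi> \<Longrightarrow> bot_guarded (hatf ws \<phi>)"
  by (induction \<phi>) (auto simp: BotP_notin_preds_hatf)

lemma bot_args_empty: "BotP \<notin> preds \<phi> \<Longrightarrow> bot_args \<phi> = {}"
  by (induction \<phi> rule: bot_args.induct) auto

lemma bot_guarded_foldl_Star: "bot_guarded (foldl Star F L) \<longleftrightarrow> bot_guarded F \<and> (\<forall>G \<in> set L. bot_guarded G)"
  by (induction L arbitrary: F) auto

lemma bot_args_foldl_Star: "bot_args (foldl Star F L) = bot_args F \<union> \<Union> (bot_args ` set L)"
  by (induction L arbitrary: F) auto

lemma hatR0_body_shape:
  assumes "(p, xs, body) \<in> hatR0 R Pr ws zs"
    and R_prog: "\<forall>r \<in> R. progressing \<kappa> r"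
    and zs_fresh: "\<forall>r \<in> R. set zs \<inter> rule_vars r = {}"
    and "ws \<noteq> []"
  obtains x us F where "body = Star (PointsTo (Var x) us) F"
    and "drop (\<kappa> + length ws) us = map Var zs" and "\<exists>w. Var w \<in> set us"
    and "bot_guarded F" and "bot_args F \<subseteq> Var ` set zs"
proof -
  from assms(1)[unfolded hatR0_def mem_Collect_eq] obtain p0 xs0 ys \<rho> \<sigma> "is" ds where
    rule: "(p, xs, body) = (Hat p0, xs0 @ ws,
       Star (PointsTo (Var (hd xs0)) (map (tsubst \<sigma>) (ys @ map Var ws @ map Var zs)))
            (foldl Star (fsubst \<sigma> (hatf ws \<rho>))
               (map (\<lambda>i. Pred BotP [Var (zs ! i)]) is @ map (\<lambda>x. Eq (Var x) (Var (the (\<sigma> x)))) ds)))"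
    and inR: "(p0, xs0, Star (PointsTo (Var (hd xs0)) ys) \<rho>) \<in> R"
    and dom_\<sigma>: "dom \<sigma> \<subseteq> fv \<rho> - {hd xs0}" and "is": "set is \<subseteq> {..<length zs}"
    by (elim exE conjE) (rule that, assumption+)
  define us where "us = map (tsubst \<sigma>) (ys @ map Var ws @ map Var zs)"
  define F where "F = foldl Star (fsubst \<sigma> (hatf ws \<rho>))
    (map (\<lambda>i. Pred BotP [Var (zs ! i)]) is @ map (\<lambda>x. Eq (Var x) (Var (the (\<sigma> x)))) ds)"
  have body: "body = Star (PointsTo (Var (hd xs0)) us) F"
    using rule unfolding us_def F_def by simp
  from R_prog inR have "length ys = \<kappa>" and "pto_free \<rho>"
    unfolding progressing_def by auto
  have "set zs \<inter> fv \<rho> = {}"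
    using zs_fresh inR fv_subset_allvars unfolding rule_vars_def by fastforce
  with dom_\<sigma> have "z \<notin> dom \<sigma>" if "z \<in> set zs" for z
    using that by blast
  then have "tsubst \<sigma> (Var z) = Var z" if "z \<in> set zs" for z
    using that by (simp add: domIff)
  with \<open>length ys = \<kappa>\<close> have drop_us: "drop (\<kappa> + length ws) us = map Var zs"
    unfolding us_def by (simp add: drop_map)
  obtain w where w: "tsubst \<sigma> (Var (hd ws)) = Var w"
    using tsubst_Var_is_Var ..
  have "Var (hd ws) \<in> set (ys @ map Var ws @ map Var zs)"
    using \<open>ws \<noteq> []\<close> by simp
  then have "tsubst \<sigma> (Var (hd ws)) \<in> set us"
    unfolding us_def set_map by (rule imageI)
  then have "Var w \<in> set us"
    unfolding w .
  then have var_in_us: "\<exists>w. Var w \<in> set us" ..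
  have "bot_guarded F"
    using \<open>pto_free \<rho>\<close> unfolding F_def by (auto simp: bot_guarded_foldl_Star bot_guarded_hatf)
  moreover have "bot_args F \<subseteq> Var ` set zs"
    using "is" unfolding F_def by (auto simp: bot_args_foldl_Star bot_args_empty BotP_notin_preds_hatf)
  ultimately show thesis
    by (rule that[OF body drop_us var_in_us])
qed

lemma sat_Star_PointsTo_cell:
  assumes "sat R lbot s h (Star (PointsTo (Var x) us) F)"
  shows "h (s x) = Some (map (tval lbot s) us)"
proof -
  from assms obtain h1 h2 where "h = h1 ++ h2" "dom h1 \<inter> dom h2 = {}"
    and "sat R lbot s h1 (PointsTo (Var x) us)"
    by (rule sat_StarE) blast
  moreover from this(3) have "h1 = [s x \<mapsto> map (tval lbot s) us]"
    by (rule sat_PointsToE) simp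
  ultimately show ?thesis
    by (auto simp: map_add_def split: option.splits)
qed

lemma map_tval_not_replicate:
  assumes "is_store lbot s" and "Var x \<in> set ts"
  shows "map (tval lbot s) ts \<noteq> replicate K lbot"
proof -
  from assms(2) have "s x \<in> set (map (tval lbot s) ts)"
    by force
  moreover from assms(1) have "s x \<noteq> lbot"
    by (simp add: is_store_def)
  ultimately show ?thesis
    by (metis in_set_replicate)
qed

lemma bot_cells_map_add: "bot_cells lbot K (h1 ++ h2) \<subseteq> bot_cells lbot K h1 \<union> bot_cells lbot K h2"
  by (auto simp: bot_cells_def map_add_def split: option.splits)

lemma connected_cellsI:
  assumes "h l' = Some v" and "v \<noteq> replicate K lbot"
  shows "set (drop d v) \<subseteq> connected_cells lbot K d h"
  using assms unfolding connected_cells_def by force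

lemma connected_cells_mono:
  assumes "h \<subseteq>\<^sub>m h'"
  shows "connected_cells lbot K d h \<subseteq> connected_cells lbot K d h'"
proof
  fix l assume "l \<in> connected_cells lbot K d h"
  then obtain l' where l': "l' \<in> dom h" and "h l' \<noteq> Some (replicate K lbot)"
    and "l \<in> set (drop d (the (h l')))"
    unfolding connected_cells_def by blast
  moreover have "h' l' = h l'"
    using assms l' by (simp add: map_le_def)
  moreover have "l' \<in> dom h'"
    using map_le_implies_dom_le[OF assms] l' by blast
  ultimately show "l \<in> connected_cells lbot K d h'"
    unfolding connected_cells_def by (intro CollectI bexI[of _ l']) simp_all
qed

lemma connected_cells_map_add:
  assumes "dom h1 \<inter> dom h2 = {}"
  shows "connected_cells lbot K d h1 \<union> connected_cells lbot K d h2 \<subseteq> connected_cells lbot K d (h1 ++ h2)"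
proof -
  have "h1 \<subseteq>\<^sub>m h1 ++ h2"
    unfolding map_le_iff_map_add_commute by (rule map_add_comm[OF assms])
  then show ?thesis
    by (intro Un_least connected_cells_mono map_le_map_add)
qed

lemma bot_cells_connected_or_bot_arg:
  assumes "sat (Rr \<kappa> R Pr ws zs) lbot s h \<phi>" and "is_store lbot s" and "bot_guarded \<phi>"
    and R_prog: "\<forall>r \<in> R. progressing \<kappa> r"
    and zs_fresh: "\<forall>r \<in> R. set zs \<inter> rule_vars r = {}"
    and "ws \<noteq> []"
  defines "K \<equiv> \<kappa> + length ws + length zs"
  shows "bot_cells lbot K h \<subseteq> connected_cells lbot K (\<kappa> + length ws) h \<union> tval lbot s ` bot_args \<phi>"
  using assms(1-3)
proof (induction rule: sat.induct)
  case (sat_eq s t u h)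
  then show ?case
    by (simp add: bot_cells_def)
next
  case (sat_neq s t u h)
  then show ?case
    by (simp add: bot_cells_def)
next
  case (sat_pto s t h ts)
  then obtain x where "Var x \<in> set ts"
    by auto
  with sat_pto.prems(1) have "map (tval lbot s) ts \<noteq> replicate K lbot"
    by (rule map_tval_not_replicate)
  with sat_pto.hyps(2) have "bot_cells lbot K h = {}"
    by (auto simp: bot_cells_def)
  then show ?case
    by simp
next
  case (sat_star h1 h2 s a b)
  then have "bot_cells lbot K h1 \<subseteq> connected_cells lbot K (\<kappa> + length ws) h1 \<union> tval lbot s ` bot_args a"
    and "bot_cells lbot K h2 \<subseteq> connected_cells lbot K (\<kappa> + length ws) h2 \<union> tval lbot s ` bot_args b"
    by simp_all
  with bot_cells_map_add[of lbot K h1 h2]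
    connected_cells_map_add[OF sat_star.hyps(1), of lbot K "\<kappa> + length ws"]
  show ?case
    unfolding bot_args.simps image_Un by blast
next
  case (sat_ex v s x h a)
  have "is_store lbot (s(x := v))"
    using sat_ex.hyps(1) sat_ex.prems(1) by (simp add: is_store_def)
  moreover have "bot_guarded a" and "BotP \<notin> preds a"
    using sat_ex.prems(2) by simp_all
  ultimately have "bot_cells lbot K h \<subseteq>
      connected_cells lbot K (\<kappa> + length ws) h \<union> tval lbot (s(x := v)) ` bot_args a"
    using sat_ex.IH by blast
  with \<open>BotP \<notin> preds a\<close> show ?case
    by (simp add: bot_args_empty)
next
  case (sat_pred p xs body ts s' s h)
  have "is_store lbot s'"
    using sat_pred.hyps(3) by (simp add: is_store_def)
  from sat_pred.hyps(1) consider
      (bot) "(p, xs, body) = bot_rule K ws"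
    | (hat) "(p, xs, body) \<in> hatR0 R Pr ws zs"
    unfolding Rr_def K_def by auto
  then show ?case
  proof cases
    case bot
    then have "p = BotP" and "xs = [hd ws]" and body: "body = PointsTo (Var (hd ws)) (replicate K Bot)"
      by (auto simp: bot_rule_def)
    with sat_pred.hyps(2,4) obtain t where "ts = [t]" and "s' (hd ws) = tval lbot s t"
      by (cases ts) auto
    moreover have "dom h = {s' (hd ws)}"
      using sat_pred.hyps(5) unfolding body by (rule sat_PointsToE) simp
    ultimately show ?thesis
      using \<open>p = BotP\<close> by (auto simp: bot_cells_def)
  next
    case hat
    obtain x us F where body: "body = Star (PointsTo (Var x) us) F"
      and drop_us: "drop (\<kappa> + length ws) us = map Var zs" and "\<exists>w. Var w \<in> set us"
      and "bot_guarded F" and bot_args_F: "bot_args F \<subseteq> Var ` set zs"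
      by (rule hatR0_body_shape[OF hat R_prog zs_fresh \<open>ws \<noteq> []\<close>])
    have cell: "h (s' x) = Some (map (tval lbot s') us)"
      using sat_pred.hyps(5) unfolding body by (rule sat_Star_PointsTo_cell)
    from \<open>\<exists>w. Var w \<in> set us\<close> obtain w where "Var w \<in> set us" ..
    with \<open>is_store lbot s'\<close> have "map (tval lbot s') us \<noteq> replicate K lbot"
      by (rule map_tval_not_replicate)
    with cell have "set (drop (\<kappa> + length ws) (map (tval lbot s') us))
        \<subseteq> connected_cells lbot K (\<kappa> + length ws) h"
      by (rule connected_cellsI)
    moreover have "drop (\<kappa> + length ws) (map (tval lbot s') us) = map s' zs"
      using drop_us by (simp add: drop_map)
    ultimately have "s' ` set zs \<subseteq> connected_cells lbot K (\<kappa> + length ws) h"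
      by simp
    moreover have "tval lbot s' ` bot_args body \<subseteq> s' ` set zs"
      using bot_args_F unfolding body by auto
    moreover have "bot_guarded body"
      using body \<open>bot_guarded F\<close> \<open>Var w \<in> set us\<close> by auto
    ultimately show ?thesis
      using sat_pred.IH \<open>is_store lbot s'\<close> by blast
  qed
next
  case (sat_orL s h a b)
  then have "bot_cells lbot K h \<subseteq> connected_cells lbot K (\<kappa> + length ws) h \<union> tval lbot s ` bot_args a"
    by simp
  then show ?case
    by auto
next
  case (sat_orR s h b a)
  then have "bot_cells lbot K h \<subseteq> connected_cells lbot K (\<kappa> + length ws) h \<union> tval lbot s ` bot_args b"
    by simp
  then show ?case
    by auto
qed

theorem mainTheorem17:
  fixes R :: "('v, 'p) rule set"
    and \<psi> \<alpha> :: "('v, 'p) form"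
    and \<kappa> \<nu> \<mu> :: nat
    and ws zs :: "'v list"
    and lbot :: 'l
    and s :: "'v \<Rightarrow> 'l"
    and h' :: "'l \<rightharpoonup> 'l list"
  assumes R_fin: "finite R"
    and R_prog: "\<forall>r \<in> R. progressing \<kappa> r"
    and R_ex: "\<forall>r \<in> R. card (evars r) = \<mu>"
    and nu_pos: "\<nu> > 0"
    and ws_len: "length ws = \<nu>" and ws_dist: "distinct ws"
    and ws_fresh: "\<forall>r \<in> R. set ws \<inter> rule_vars r = {}"
    and zs_len: "length zs = \<mu>" and zs_dist: "distinct zs"
    and zs_fresh: "\<forall>r \<in> R. set zs \<inter> rule_vars r = {}"
    and zs_ws: "set zs \<inter> set ws = {}"
    and alpha_nopto: "pto_free \<alpha>"
    and alpha_preds: "reach R \<alpha> \<subseteq> reach R \<psi>"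
    and store: "is_store lbot s"
    and heap: "is_heap lbot (\<kappa> + \<nu> + \<mu>) h'"
    and sat: "sat (Rr \<kappa> R (reach R \<psi>) ws zs) lbot s h' (hatf ws \<alpha>)"
  shows "\<forall>l \<in> dom h'. h' l = Some (replicate (\<kappa> + \<nu> + \<mu>) lbot) \<longrightarrow>
           (\<exists>l' \<in> dom h'. h' l' \<noteq> Some (replicate (\<kappa> + \<nu> + \<mu>) lbot) \<and>
              l \<in> set (drop (\<kappa> + \<nu>) (the (h' l'))))"
proof -
  have "ws \<noteq> []"
    using ws_len nu_pos by auto
  have "bot_cells lbot (\<kappa> + \<nu> + \<mu>) h' \<subseteq> connected_cells lbot (\<kappa> + \<nu> + \<mu>) (\<kappa> + \<nu>) h'"
    using bot_cells_connected_or_bot_arg[OF sat store bot_guarded_hatf[OF alpha_nopto] R_prog zs_fresh \<open>ws \<noteq> []\<close>]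
    by (simp add: ws_len zs_len bot_args_empty[OF BotP_notin_preds_hatf])
  then show ?thesis
    unfolding bot_cells_def connected_cells_def by blast
qed

end
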